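(* Suppose the bandwidth is insufficient, i.e. $BW_{max,EUT}\le\sum_{i\in S_{EUT}}\bar F^{-1}_{B_i}(\lambda_i;b^* )$ with $\lambda_i=w^{-1}(r_{EUT}(b^* )/h_i(b^* ))$, and consider bandwidth reallocation: the SP offers the same rate $b^*$ to the same set $S_{EUT}$ and may choose any allocation $(BW'_i)_{i\in S_{EUT}}$, $BW'_i\ge0$, with $\sum_i BW'_i=BW_{max,EUT}$, and any price $r'$. For such an allocation let $L(BW'):=\max_{i\in S_{EUT}}\{r_{EUT}(b^* )-h_i(b^* )w(\bar F_{B_i}(b^*;BW'_i))\}$. Then (i) $\inf_{BW'}L(BW')\le L(BW_{EUT})=L_{RRM}$, so allowing reallocation does not increase the minimal revenue loss compared with the strict constraints; and (ii) for every admissible allocation $BW'$, $L(BW')\ge0$; equivalently, there is no admissible allocation and price $r'\ge r_{EUT}(b^* )$ at which all users in $S_{EUT}$ accept under prospect theory. In particular the EUT revenue cannot be fully recovered by bandwidth reallocation.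
   Context: A service provider (SP) serves a finite set $S_{EUT}$ of end-users. For each user $i$ there is a benefit function $h_i:(0,\infty)\to(0,\infty)$ and, for each rate $b>0$, a service-guarantee function $BW\mapsto\bar F_{B_i}(b;BW)$ from $[0,\infty)$ to $[0,1)$, continuous and strictly increasing with $\bar F_{B_i}(b;0)=0$. The EUT pricing function is $r_{EUT}:(0,\infty)\to(0,\infty)$. A probability weighting function $w:[0,1]\to[0,1]$ is a continuous strictly increasing bijection (e.g. Prelec's $w(p)=\exp(-(-\ln p)^\alpha)$, $\alpha\in(0,1]$). A user offered rate $b$ at price $r$ with bandwidth $BW_i$ accepts under EUT iff $h_i(b)\bar F_{B_i}(b;BW_i)>r$, and under prospect theory (PT) iff $h_i(b)\,w(\bar F_{B_i}(b;BW_i))>r$. Notation: for $q\ge0$, $\bar F^{-1}_{B_i}(q;b)$ is the unique $BW\ge0$ with $\bar F_{B_i}(b;BW)=q$ if $q$ lies in the range of $\bar F_{B_i}(b;\cdot)$ and $+\infty$ otherwise; $w^{-1}(x):=+\infty$ for $x>1$ and $\bar F^{-1}_{B_i}(+\infty;b):=+\infty$. EUT equilibrium data: a rate $b^*=b^*_{1,EUT}>0$ and bandwidths $BW_{EUT}=(BW_{i,EUT})_{i\in S_{EUT}}$, $BW_{i,EUT}\ge0$, with $\sum_{i}BW_{i,EUT}=BW_{max,EUT}$, such that every $i\in S_{EUT}$ accepts under EUT the offer of rate $b^*$ at price $r_{EUT}(b^* )$ with bandwidth $BW_{i,EUT}$. $L_{RRM}:=\max_{i\in S_{EUT}}\{r_{EUT}(b^*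 )-h_i(b^* )w(\bar F_{B_i}(b^*;BW_{i,EUT}))\}$. *)

theory Defs
  imports "HOL-Analysis.Analysis" "HOL-Library.Extended_Real"
begin

text \<open>Inverse of the probability weighting function, extended by +infinity
  outside [0,1] (the paper sets it to +infinity for x > 1; arguments used are positive).\<close>
definition winv :: "(real \<Rightarrow> real) \<Rightarrow> real \<Rightarrow> ereal" where
  "winv w x = (if x \<in> {0..1} then ereal (the_inv_into {0..1} w x) else \<infinity>)"

text \<open>Inverse service guarantee: Finv F q is the unique BW \<ge> 0 with F BW = q
  if q lies in the range of F on [0,\<infinity>), and +infinity otherwise
  (in particular Finv F \<infinity> = \<infinity>).  Here F = Fbar i b.\<close>
definition Finv :: "(real \<Rightarrow> real) \<Rightarrow> ereal \<Rightarrow> ereal" where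
  "Finv F q = (if \<exists>BW\<ge>0. ereal (F BW) = q
               then ereal (THE BW. BW \<ge> 0 \<and> ereal (F BW) = q) else \<infinity>)"

definition LossPT :: "'a set \<Rightarrow> ('a \<Rightarrow> real \<Rightarrow> real) \<Rightarrow> (real \<Rightarrow> real)
    \<Rightarrow> ('a \<Rightarrow> real \<Rightarrow> real \<Rightarrow> real) \<Rightarrow> real \<Rightarrow> real \<Rightarrow> ('a \<Rightarrow> real) \<Rightarrow> real" where
  "LossPT S h w Fbar r b BW = Max ((\<lambda>i. r - h i b * w (Fbar i b (BW i))) ` S)"

definition admissible :: "'a set \<Rightarrow> real \<Rightarrow> ('a \<Rightarrow> real) \<Rightarrow> bool" where
  "admissible S BWmax BW \<longleftrightarrow> (\<forall>i\<in>S. BW i \<ge> 0) \<and> (\<Sum>i\<in>S. BW i) = BWmax"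

end

theory Submission
  imports Defs
begin

text \<open>A user accepting under prospect theory at allocation \<open>x\<close> has
  \<open>w (F x) > r / h\<close>; inverting first \<open>w\<close> and then \<open>F\<close> (both strictly increasing)
  shows that its threshold bandwidth \<open>Finv F (winv w (r / h))\<close> lies strictly below \<open>x\<close>.
  If every user accepted, summing these strict inequalities would put the total
  allocation \<open>BWmax\<close> strictly above the sum of thresholds, contradicting the
  insufficiency assumption.\<close>

lemma winv_less:
  fixes w :: "real \<Rightarrow> real"
  assumes mono: "strict_mono_on {0..1} w" and bij: "bij_betw w {0..1} {0..1}"
    and p: "p \<in> {0..1}" and y: "0 \<le> y" "y < w p"
  shows "\<exists>l. winv w y = ereal l \<and> 0 \<le> l \<and> l < p"
proof -
  have inj: "inj_on w {0..1}" and img: "w ` {0..1} = {0..1}"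
    using bij by (simp_all add: bij_betw_def)
  have "w p \<le> 1" using p img by auto
  with y have y_img: "y \<in> w ` {0..1}" using img by auto
  define l where "l = the_inv_into {0..1} w y"
  have l01: "l \<in> {0..1}" unfolding l_def by (rule the_inv_into_into[OF inj y_img]) simp
  have wl: "w l = y" unfolding l_def by (rule f_the_inv_into_f[OF inj y_img])
  have "l < p"
  proof (rule ccontr)
    assume "\<not> l < p"
    then have "w p \<le> w l" by (intro strict_mono_on_leD[OF mono p l01]) simp
    with y wl show False by simp
  qed
  moreover have "winv w y = ereal l" using y_img img by (simp add: winv_def l_def)
  ultimately show ?thesis using l01 by auto
qed

lemma Finv_ereal_eq:
  fixes F :: "real \<Rightarrow> real"
  assumes mono: "strict_mono_on {0..} F" and c: "0 \<le> c"
  shows "Finv F (ereal (F c)) = ereal c"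
proof -
  have inj: "inj_on F {0..}" by (rule strict_mono_on_imp_inj_on[OF mono])
  have "(THE BW. BW \<ge> 0 \<and> ereal (F BW) = ereal (F c)) = c"
    using c inj by (intro the_equality) (auto simp: inj_on_eq_iff)
  then show ?thesis using c unfolding Finv_def by auto
qed

lemma Finv_less:
  fixes F :: "real \<Rightarrow> real"
  assumes cont: "continuous_on {0..} F" and mono: "strict_mono_on {0..} F"
    and F0: "F 0 = 0" and x: "0 \<le> x" and l: "0 \<le> l" "l < F x"
  shows "\<exists>c. Finv F (ereal l) = ereal c \<and> c < x"
proof -
  have "continuous_on {0..x} F" by (rule continuous_on_subset[OF cont]) auto
  then obtain c where c: "0 \<le> c" "c \<le> x" "F c = l"
    using IVT'[of F 0 l x] F0 l x by auto
  with l have "c < x" by (cases "c = x") auto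
  with c show ?thesis using Finv_ereal_eq[OF mono \<open>0 \<le> c\<close>] by auto
qed

lemma threshold_less_if_accepts:
  fixes F w :: "real \<Rightarrow> real"
  assumes cont: "continuous_on {0..} F" and mono: "strict_mono_on {0..} F"
    and F0: "F 0 = 0" and F_le_1: "F x \<le> 1"
    and w_mono: "strict_mono_on {0..1} w" and w_bij: "bij_betw w {0..1} {0..1}"
    and h: "h > 0" and r: "r \<ge> 0" and x: "0 \<le> x"
    and accepts: "h * w (F x) > r"
  shows "\<exists>c. Finv F (winv w (r / h)) = ereal c \<and> c < x"
proof -
  have "F 0 \<le> F x" using x by (intro strict_mono_on_leD[OF mono]) auto
  with F0 F_le_1 have Fx: "F x \<in> {0..1}" by simp
  have "r / h < w (F x)" using accepts h by (simp add: divide_less_eq mult.commute)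
  moreover have "0 \<le> r / h" using r h by simp
  ultimately obtain l where l: "winv w (r / h) = ereal l" "0 \<le> l" "l < F x"
    using winv_less[OF w_mono w_bij Fx] by blast
  then show ?thesis using Finv_less[OF cont mono F0 x] by metis
qed

lemma LossPT_less_0_iff:
  assumes "finite S" "S \<noteq> {}"
  shows "LossPT S h w Fbar r b BW < 0 \<longleftrightarrow> (\<forall>i\<in>S. h i b * w (Fbar i b (BW i)) > r)"
  using assms by (simp add: LossPT_def Max_less_iff)

lemma not_all_accept_if_insufficient:
  fixes S :: "'a set" and F :: "'a \<Rightarrow> real \<Rightarrow> real" and w :: "real \<Rightarrow> real"
  assumes fin: "finite S" and ne: "S \<noteq> {}"
    and h_pos: "\<forall>i\<in>S. h i > 0" and r: "r \<ge> 0"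
    and F_cont: "\<forall>i\<in>S. continuous_on {0..} (F i)"
    and F_mono: "\<forall>i\<in>S. strict_mono_on {0..} (F i)"
    and F_zero: "\<forall>i\<in>S. F i 0 = 0"
    and F_le_1: "\<forall>i\<in>S. \<forall>BW\<ge>0. F i BW \<le> 1"
    and w_mono: "strict_mono_on {0..1} w" and w_bij: "bij_betw w {0..1} {0..1}"
    and insufficient: "ereal BWmax \<le> (\<Sum>i\<in>S. Finv (F i) (winv w (r / h i)))"
    and adm: "admissible S BWmax BW"
  shows "\<not> (\<forall>i\<in>S. h i * w (F i (BW i)) > r)"
proof
  assume accepts: "\<forall>i\<in>S. h i * w (F i (BW i)) > r"
  have "\<exists>c. Finv (F i) (winv w (r / h i)) = ereal c \<and> c < BW i" if i: "i \<in> S" for i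
  proof -
    have "0 \<le> BW i" using adm i by (simp add: admissible_def)
    then show ?thesis
      using i h_pos F_cont F_mono F_zero F_le_1 accepts
      by (intro threshold_less_if_accepts[OF _ _ _ _ w_mono w_bij _ r]) auto
  qed
  then obtain c where c: "\<And>i. i \<in> S \<Longrightarrow> Finv (F i) (winv w (r / h i)) = ereal (c i) \<and> c i < BW i"
    by metis
  have "(\<Sum>i\<in>S. Finv (F i) (winv w (r / h i))) = (\<Sum>i\<in>S. ereal (c i))"
    using c by (intro sum.cong) auto
  with insufficient have "BWmax \<le> (\<Sum>i\<in>S. c i)" by simp
  also have "\<dots> < (\<Sum>i\<in>S. BW i)" using sum_strict_mono[OF fin ne] c by blast
  finally show False using adm by (simp add: admissible_def)
qed

theorem theorem4:
  fixes S :: "'a set" and h :: "'a \<Rightarrow> real \<Rightarrow> real"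
    and Fbar :: "'a \<Rightarrow> real \<Rightarrow> real \<Rightarrow> real"
    and rEUT :: "real \<Rightarrow> real" and w :: "real \<Rightarrow> real"
    and bstar BWmax :: real and BWeut :: "'a \<Rightarrow> real"
  assumes finS: "finite S" and neS: "S \<noteq> {}"
    and h_pos: "\<forall>i\<in>S. \<forall>b>0. h i b > 0"
    and F_cont: "\<forall>i\<in>S. \<forall>b>0. continuous_on {0..} (Fbar i b)"
    and F_mono: "\<forall>i\<in>S. \<forall>b>0. strict_mono_on {0..} (Fbar i b)"
    and F_zero: "\<forall>i\<in>S. \<forall>b>0. Fbar i b 0 = 0"
    and F_range: "\<forall>i\<in>S. \<forall>b>0. \<forall>BW\<ge>0. Fbar i b BW \<in> {0..<1}"
    and r_pos: "\<forall>b>0. rEUT b > 0"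
    and w_cont: "continuous_on {0..1} w"
    and w_mono: "strict_mono_on {0..1} w"
    and w_bij: "bij_betw w {0..1} {0..1}"
    and b_pos: "bstar > 0"
    and BW_nonneg: "\<forall>i\<in>S. BWeut i \<ge> 0"
    and BW_sum: "(\<Sum>i\<in>S. BWeut i) = BWmax"
    and accept: "\<forall>i\<in>S. h i bstar * Fbar i bstar (BWeut i) > rEUT bstar"
    and insufficient: "ereal BWmax \<le>
          (\<Sum>i\<in>S. Finv (Fbar i bstar) (winv w (rEUT bstar / h i bstar)))"
  shows "Inf {LossPT S h w Fbar (rEUT bstar) bstar BW' | BW'. admissible S BWmax BW'}
           \<le> LossPT S h w Fbar (rEUT bstar) bstar BWeut
       \<and> (\<forall>BW'. admissible S BWmax BW' \<longrightarrow> LossPT S h w Fbar (rEUT bstar) bstar BW' \<ge> 0)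
       \<and> \<not> (\<exists>BW' r'. admissible S BWmax BW' \<and> r' \<ge> rEUT bstar
               \<and> (\<forall>i\<in>S. h i bstar * w (Fbar i bstar (BW' i)) > r'))"
proof -
  let ?r = "rEUT bstar" and ?L = "LossPT S h w Fbar (rEUT bstar) bstar"
  have not_all_accept: "\<not> (\<forall>i\<in>S. h i bstar * w (Fbar i bstar (B i)) > ?r)"
    if "admissible S BWmax B" for B
    using that r_pos b_pos h_pos F_cont F_mono F_zero F_range finS neS
    by (intro not_all_accept_if_insufficient[OF _ _ _ _ _ _ _ _ w_mono w_bij insufficient])
       (auto simp: less_imp_le)
  have nonneg: "?L B \<ge> 0" if "admissible S BWmax B" for B
    using not_all_accept[OF that] LossPT_less_0_iff[OF finS neS] by (meson not_le)
  have "admissible S BWmax BWeut" using BW_nonneg BW_sum by (simp add: admissible_def)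
  then have "Inf {?L B | B. admissible S BWmax B} \<le> ?L BWeut"
    by (intro cInf_lower bdd_belowI[of _ 0]) (auto intro: nonneg)
  moreover have "\<not> (\<exists>B r'. admissible S BWmax B \<and> r' \<ge> ?r
                   \<and> (\<forall>i\<in>S. h i bstar * w (Fbar i bstar (B i)) > r'))"
    using not_all_accept by fastforce
  ultimately show ?thesis using nonneg by blast
qed

end
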